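(* Let $\gamma^*\ge 0$ and $\epsilon>0$, and let $u,\hat u:\mathbf{S}\to\mathbb{R}^{|P|}$ be two utility functions on the same finite game structure. If $|u_p(s)-\hat u_p(s)|\le\epsilon$ for every $(p,s)\in\mathcal{I}$ satisfying $\mathrm{Reg}_p(s;u)=0$ or $\mathrm{Reg}_p(s;\hat u)\le\gamma^*$, then $E(u)\subseteq E_{2\epsilon}(\hat u)$ and $E_\gamma(\hat u)\subseteq E_{2\epsilon+\gamma}(u)$ for all $0\le\gamma\le\gamma^*$.
   Context: A finite normal-form game structure: finite player set $P$, finite pure strategy sets $S_p$, pure profile space $\mathbf{S}=\prod_p S_p$, index set $\mathcal{I}=P\times\mathbf{S}$. For a utility function $u:\mathbf{S}\to\mathbb{R}^{|P|}$, a pure profile $s$ and player $p$, $A_{p,s}$ is the set of pure profiles obtained by replacing $p$'s strategy in $s$ by any $t\in S_p$; $\mathrm{Reg}_p(s;u)=\sup_{s'\in A_{p,s}}u_p(s')-u_p(s)$, $\mathrm{Reg}(s;u)=\max_p\mathrm{Reg}_p(s;u)$. $E_\gamma(u)=\{s\in\mathbf{S}:\mathrm{Reg}(s;u)\le\gamma\}$ and $E(u)=E_0(u)$. *)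

theory Defs
  imports Complex_Main "HOL-Library.FuncSet"
begin

definition profiles :: "'p set \<Rightarrow> ('p \<Rightarrow> 's set) \<Rightarrow> ('p \<Rightarrow> 's) set" where
  "profiles P S = PiE P S"

definition devs :: "('p \<Rightarrow> 's set) \<Rightarrow> 'p \<Rightarrow> ('p \<Rightarrow> 's) \<Rightarrow> ('p \<Rightarrow> 's) set" where
  "devs S p s = (\<lambda>t. s(p := t)) ` S p"

definition Reg_p :: "('p \<Rightarrow> 's set) \<Rightarrow> (('p \<Rightarrow> 's) \<Rightarrow> 'p \<Rightarrow> real) \<Rightarrow> 'p \<Rightarrow> ('p \<Rightarrow> 's) \<Rightarrow> real" where
  "Reg_p S u p s = (MAX s' \<in> devs S p s. u s' p) - u s p"

definition Reg :: "'p set \<Rightarrow> ('p \<Rightarrow> 's set) \<Rightarrow> (('p \<Rightarrow> 's) \<Rightarrow> 'p \<Rightarrow> real) \<Rightarrow> ('p \<Rightarrow> 's) \<Rightarrow> real" where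
  "Reg P S u s = (MAX p \<in> P. Reg_p S u p s)"

definition Eq_gamma :: "'p set \<Rightarrow> ('p \<Rightarrow> 's set) \<Rightarrow> (('p \<Rightarrow> 's) \<Rightarrow> 'p \<Rightarrow> real) \<Rightarrow> real \<Rightarrow> ('p \<Rightarrow> 's) set" where
  "Eq_gamma P S u \<gamma> = {s \<in> profiles P S. Reg P S u s \<le> \<gamma>}"

definition Eq :: "'p set \<Rightarrow> ('p \<Rightarrow> 's set) \<Rightarrow> (('p \<Rightarrow> 's) \<Rightarrow> 'p \<Rightarrow> real) \<Rightarrow> ('p \<Rightarrow> 's) set" where
  "Eq P S u = Eq_gamma P S u 0"

end

theory Submission
  imports Defs
begin

text \<open>Fix a player p and a profile s, and let x be a best response of p against s for one of the
  two utilities. Since x differs from s only in p's strategy, it has the same deviations, so its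
  regret is 0 and the closeness hypothesis holds at x. If it also holds at s, the regret of s
  for that utility exceeds its regret for the other one by at most 2\<epsilon>: the maximal payoff
  moves by at most \<epsilon> and the payoff of s by at most \<epsilon>. For s in E(u) closeness at s
  comes from Reg_p(s;u) = 0, for s in E_\<gamma>(\<hat>u) from Reg_p(s;\<hat>u) \<le> \<gamma> \<le> \<gamma>*.\<close>

lemma self_in_devs:
  assumes "s p \<in> S p"
  shows "s \<in> devs S p s"
  unfolding devs_def using assms by (rule rev_image_eqI) simp

lemma devs_of_mem_devs:
  assumes "x \<in> devs S p s"
  shows "devs S p x = devs S p s"
  using assms by (auto simp: devs_def)

lemma devs_subset_profiles:
  assumes "p \<in> P" "s \<in> profiles P S"
  shows "devs S p s \<subseteq> profiles P S"
  using assms by (auto simp: devs_def profiles_def PiE_def Pi_def extensional_def)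

lemma Reg_p_nonneg:
  assumes "finite (S p)" "s p \<in> S p"
  shows "0 \<le> Reg_p S u p s"
  using assms self_in_devs[of s p S] by (simp add: Reg_p_def devs_def)

lemma best_response_exists:
  assumes "finite (S p)" "S p \<noteq> {}"
  obtains x where "x \<in> devs S p s" "Reg_p S u p x = 0"
    "Reg_p S u p s = u x p - u s p"
proof -
  have "(MAX y \<in> devs S p s. u y p) \<in> (\<lambda>y. u y p) ` devs S p s"
    using assms by (intro Max_in) (auto simp: devs_def)
  then obtain x where x: "x \<in> devs S p s" "u x p = (MAX y \<in> devs S p s. u y p)"
    by auto
  with devs_of_mem_devs[OF x(1)] show ?thesis
    using that by (simp add: Reg_p_def)
qed

lemma Reg_p_le_Reg_p_add_close:
  assumes "finite (S p)" "S p \<noteq> {}"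
    and close_s: "\<bar>u s p - v s p\<bar> \<le> \<epsilon>"
    and close_best: "\<And>x. x \<in> devs S p s \<Longrightarrow> Reg_p S v p x = 0 \<Longrightarrow> \<bar>u x p - v x p\<bar> \<le> \<epsilon>"
  shows "Reg_p S v p s \<le> Reg_p S u p s + 2 * \<epsilon>"
proof -
  obtain x where x: "x \<in> devs S p s" "Reg_p S v p x = 0"
    and Reg_v: "Reg_p S v p s = v x p - v s p"
    using best_response_exists[of S p s v] assms(1,2) by blast
  have "u x p \<le> (MAX y \<in> devs S p s. u y p)"
    using assms(1) x(1) by (simp add: devs_def)
  then have "u x p - u s p \<le> Reg_p S u p s"
    by (simp add: Reg_p_def)
  with Reg_v close_s close_best[OF x] show ?thesis
    by linarith
qed

lemma mem_Eq_gamma_iff: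
  assumes "finite P" "P \<noteq> {}"
  shows "s \<in> Eq_gamma P S u g \<longleftrightarrow> s \<in> profiles P S \<and> (\<forall>p\<in>P. Reg_p S u p s \<le> g)"
  using assms by (simp add: Eq_gamma_def Reg_def)

theorem lemma2:
  fixes P :: "'p set" and S :: "'p \<Rightarrow> 's set"
    and u uh :: "('p \<Rightarrow> 's) \<Rightarrow> 'p \<Rightarrow> real"
    and \<gamma>s \<epsilon> :: real
  assumes "finite P" and "P \<noteq> {}"
    and "\<And>p. p \<in> P \<Longrightarrow> finite (S p) \<and> S p \<noteq> {}"
    and "\<gamma>s \<ge> 0" and "\<epsilon> > 0"
    and close: "\<And>p s. p \<in> P \<Longrightarrow> s \<in> profiles P S \<Longrightarrow>
              (Reg_p S u p s = 0 \<or> Reg_p S uh p s \<le> \<gamma>s) \<Longrightarrow> \<bar>u s p - uh s p\<bar> \<le> \<epsilon>"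
  shows "Eq P S u \<subseteq> Eq_gamma P S uh (2 * \<epsilon>) \<and>
         (\<forall>\<gamma>. 0 \<le> \<gamma> \<and> \<gamma> \<le> \<gamma>s \<longrightarrow> Eq_gamma P S uh \<gamma> \<subseteq> Eq_gamma P S u (2 * \<epsilon> + \<gamma>))"
proof -
  note Eq_iff = mem_Eq_gamma_iff[OF assms(1,2)]
  have "Eq P S u \<subseteq> Eq_gamma P S uh (2 * \<epsilon>)"
  proof
    fix s assume "s \<in> Eq P S u"
    then have s: "s \<in> profiles P S" and Reg_u: "\<And>p. p \<in> P \<Longrightarrow> Reg_p S u p s \<le> 0"
      by (auto simp: Eq_def Eq_iff)
    have "Reg_p S uh p s \<le> 2 * \<epsilon>" if p: "p \<in> P" for p
    proof -
      have "Reg_p S u p s = 0"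
        using Reg_u[OF p] Reg_p_nonneg[of S p s u] assms(3)[OF p] p s
        by (fastforce simp: profiles_def)
      then show ?thesis
        using Reg_p_le_Reg_p_add_close[of S p u s uh \<epsilon>] assms(3,4) close p s
          devs_subset_profiles[OF p s] by (fastforce simp: abs_minus_commute)
    qed
    with s show "s \<in> Eq_gamma P S uh (2 * \<epsilon>)"
      by (simp add: Eq_iff)
  qed
  moreover have "Eq_gamma P S uh \<gamma> \<subseteq> Eq_gamma P S u (2 * \<epsilon> + \<gamma>)"
    if \<gamma>: "0 \<le> \<gamma>" "\<gamma> \<le> \<gamma>s" for \<gamma>
  proof
    fix s assume "s \<in> Eq_gamma P S uh \<gamma>"
    then have s: "s \<in> profiles P S" and Reg_uh: "\<And>p. p \<in> P \<Longrightarrow> Reg_p S uh p s \<le> \<gamma>"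
      by (auto simp: Eq_iff)
    have "Reg_p S u p s \<le> \<gamma> + 2 * \<epsilon>" if p: "p \<in> P" for p
      using Reg_p_le_Reg_p_add_close[of S p uh s u \<epsilon>] Reg_uh[OF p] \<gamma> assms(3) close p s
        devs_subset_profiles[OF p s] by (fastforce simp: abs_minus_commute)
    with s show "s \<in> Eq_gamma P S u (2 * \<epsilon> + \<gamma>)"
      by (simp add: Eq_iff add.commute)
  qed
  ultimately show ?thesis
    by blast
qed

end
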